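(* Let $f$ be a periodic traveling wave of speed $c$ ($c^2\neq1$). If $|\operatorname{Re}\lambda|$ is sufficiently large, then $\operatorname{sgn}(G_p(\lambda))=\operatorname{sgn}(\gamma)$; i.e. $G_p(\lambda)>0$ for superluminal waves and $G_p(\lambda)<0$ for subluminal waves.
   Context: A traveling wave of speed $c$ ($c^2\neq1$) is a real solution $f$ of $(c^2-1)f''+\sin f=0$, with energy $E$ given by $\tfrac12(c^2-1)(f')^2+1-\cos f=E$; it is subluminal if $c^2<1$, superluminal if $c^2>1$; periodic traveling waves are librational ($0<E<2$) or rotational ($E<0$ if $c^2<1$, $E>2$ if $c^2>1$), with fundamental period $T$ (smallest $T>0$ with $f(z+T)=f(z)\pmod{2\pi}$). Let $\gamma=1/(c^2-1)$. Equation (P): $p''-2c\gamma\lambda p'+\gamma(\lambda^2+\cos f(z))p=0$, written as a first-order system for $(p,p')$ with fundamental matrix $F(z;\lambda)$, $F(0;\lambda)=I$; its Floquet multipliers $\rho_\pm(\lambda)$ are the eigenvalues of $F(T;\lambda)$. Define $G_p(\lambda)=\log|\rho_+(\lambda)|\log|\rho_-(\lambda)|$. *)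

theory Defs
  imports "HOL-Analysis.Analysis"
begin

definition traveling_wave :: "real \<Rightarrow> (real \<Rightarrow> real) \<Rightarrow> bool" where
  "traveling_wave c f \<longleftrightarrow> c\<^sup>2 \<noteq> 1 \<and>
     (\<exists>f' f''. \<forall>z. (f has_real_derivative f' z) (at z) \<and>
                   (f' has_real_derivative f'' z) (at z) \<and>
                   (c\<^sup>2 - 1) * f'' z + sin (f z) = 0)"

definition period_mod_2pi :: "(real \<Rightarrow> real) \<Rightarrow> real \<Rightarrow> bool" where
  "period_mod_2pi f T \<longleftrightarrow> (\<forall>z. \<exists>k::int. f (z + T) = f z + 2 * pi * of_int k)"

definition fundamental_period :: "(real \<Rightarrow> real) \<Rightarrow> real \<Rightarrow> bool" where
  "fundamental_period f T \<longleftrightarrow> T > 0 \<and> period_mod_2pi f T \<and>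
     (\<forall>S. 0 < S \<and> S < T \<longrightarrow> \<not> period_mod_2pi f S)"

definition gam :: "real \<Rightarrow> real" where
  "gam c = 1 / (c\<^sup>2 - 1)"

text \<open>Coefficient matrix of the first order system for (p, p') of equation (P):
  p'' - 2 c gamma lambda p' + gamma (lambda^2 + cos f) p = 0.\<close>
definition coeff_matrix :: "real \<Rightarrow> (real \<Rightarrow> real) \<Rightarrow> complex \<Rightarrow> real \<Rightarrow> complex^2^2" where
  "coeff_matrix c f lam z = (\<chi> i j.
     if i = 1 then (if j = 1 then 0 else 1)
     else (if j = 1 then - of_real (gam c) * (lam\<^sup>2 + of_real (cos (f z)))
           else 2 * of_real c * of_real (gam c) * lam))"

definition is_fundamental_matrix ::
  "real \<Rightarrow> (real \<Rightarrow> real) \<Rightarrow> complex \<Rightarrow> (real \<Rightarrow> complex^2^2) \<Rightarrow> bool" where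
  "is_fundamental_matrix c f lam F \<longleftrightarrow> F 0 = mat 1 \<and>
     (\<forall>z. (F has_vector_derivative (coeff_matrix c f lam z ** F z)) (at z))"

definition monodromy :: "real \<Rightarrow> (real \<Rightarrow> real) \<Rightarrow> real \<Rightarrow> complex \<Rightarrow> complex^2^2" where
  "monodromy c f T lam = (THE M. \<exists>F. is_fundamental_matrix c f lam F \<and> F T = M)"

definition floquet_multipliers :: "real \<Rightarrow> (real \<Rightarrow> real) \<Rightarrow> real \<Rightarrow> complex \<Rightarrow> complex \<times> complex" where
  "floquet_multipliers c f T lam = (SOME (r1, r2). \<forall>x::complex.
     det (mat x - monodromy c f T lam) = (x - r1) * (x - r2))"

definition G_p :: "real \<Rightarrow> (real \<Rightarrow> real) \<Rightarrow> real \<Rightarrow> complex \<Rightarrow> real" where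
  "G_p c f T lam = (case floquet_multipliers c f T lam of
     (r1, r2) \<Rightarrow> ln (cmod r1) * ln (cmod r2))"

end

theory Submission
  imports Defs
begin

text \<open>
  For large \<open>|Re \<lambda>|\<close> the term \<open>\<gamma> cos f\<close> in (P) is a small perturbation of a constant
  coefficient equation whose characteristic roots are \<open>\<mu>\<^sub>1 = \<lambda>/(c - 1)\<close> and \<open>\<mu>\<^sub>2 = \<lambda>/(c + 1)\<close>.
  In the coordinates \<open>u = p' - \<mu>\<^sub>2 p\<close>, \<open>v = p' - \<mu>\<^sub>1 p\<close> the system is diagonal up to a
  coupling of size \<open>1/(2|\<lambda>|)\<close>, and a cone argument shows that along a Floquet eigensolution
  one of \<open>u\<close>, \<open>v\<close> dominates on a whole period. Hence every multiplier satisfies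
  \<open>log |\<rho>| \<approx> T Re \<mu>\<^sub>i\<close> for some \<open>i\<close>. Liouville's formula gives
  \<open>|\<rho>\<^sub>+ \<rho>\<^sub>-| = exp (T (Re \<mu>\<^sub>1 + Re \<mu>\<^sub>2))\<close>, so the two logarithms are close to
  \<open>T Re \<mu>\<^sub>1\<close> and \<open>T Re \<mu>\<^sub>2\<close> in some order, and their product has the sign of
  \<open>Re \<mu>\<^sub>1 Re \<mu>\<^sub>2 = \<gamma> (Re \<lambda>)\<^sup>2\<close>. The fundamental matrix, needed to make the monodromy
  well defined, is obtained from a Picard series and is unique by a Gronwall estimate.
\<close>

section \<open>Linear differential equations\<close>

definition primitive :: "(real \<Rightarrow> 'a::banach) \<Rightarrow> real \<Rightarrow> 'a" where
  "primitive g z = integral {0..z} g - integral {z..0} g"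

lemma primitive_nonneg: "0 \<le> z \<Longrightarrow> primitive g z = integral {0..z} g"
  by (cases "z = 0") (auto simp: primitive_def)

lemma primitive_nonpos: "z \<le> 0 \<Longrightarrow> primitive g z = - integral {z..0} g"
  by (cases "z = 0") (auto simp: primitive_def)

lemma primitive_eq_integral_from:
  fixes g :: "real \<Rightarrow> 'a::banach"
  assumes g: "continuous_on UNIV g" and w: "w \<in> {-N..N}"
  shows "primitive g w = integral {-N..w} g - integral {-N..0} g"
proof -
  have "g integrable_on {-N..max w 0}"
    by (rule integrable_continuous_real) (meson g continuous_on_subset subset_UNIV)
  from Henstock_Kurzweil_Integration.integral_combine[OF _ _ this, of "min w 0"] w
  show ?thesis
    by (cases "0 \<le> w") (auto simp: primitive_nonneg primitive_nonpos algebra_simps)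
qed

lemma primitive_has_vector_derivative:
  fixes g :: "real \<Rightarrow> 'a::banach"
  assumes g: "continuous_on UNIV g"
  shows "(primitive g has_vector_derivative g z) (at z)"
proof -
  define N where "N = \<bar>z\<bar> + 1"
  have z: "z \<in> {-N<..<N}" unfolding N_def by auto
  have "((\<lambda>w. integral {-N..w} g - integral {-N..0} g) has_vector_derivative g z)
      (at z within {-N..N})"
    using integral_has_vector_derivative[OF continuous_on_subset[OF g], of "-N" N z] z
    by (auto intro!: derivative_eq_intros)
  then have "(primitive g has_vector_derivative g z) (at z within {-N..N})"
    by (rule has_vector_derivative_transform[rotated 2])
       (use z primitive_eq_integral_from[OF g] in auto)
  moreover have "z \<in> interior {-N..N}" using z by auto
  ultimately show ?thesis
    by (metis at_within_interior)
qed

lemma integral_norm_le_power: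
  fixes g :: "real \<Rightarrow> 'a::banach"
  assumes g: "continuous_on {0..z} g" and z: "0 \<le> z"
    and bound: "\<And>s. s \<in> {0..z} \<Longrightarrow> norm (g s) \<le> C * K * (K * s) ^ n / fact n"
  shows "norm (integral {0..z} g) \<le> C * (K * z) ^ Suc n / fact (Suc n)"
proof -
  define a where "a = C * K ^ Suc n / fact (Suc n)"
  have "((\<lambda>s. a * s ^ Suc n) has_real_derivative a * (real (Suc n) * s ^ n)) (at s)" for s
    by (intro DERIV_cmult) (use DERIV_pow[of "Suc n" s] in simp)
  moreover have "a * (real (Suc n) * s ^ n) = C * K * (K * s) ^ n / fact n" for s
    by (simp add: a_def power_mult_distrib fact_Suc field_simps del: of_nat_Suc)
  ultimately have "((\<lambda>s. C * K * (K * s) ^ n / fact n) has_integral a * z ^ Suc n) {0..z}"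
    using fundamental_theorem_of_calculus[OF z, of "\<lambda>s. a * s ^ Suc n"]
    by (simp add: has_real_derivative_iff_has_vector_derivative[symmetric]
        has_field_derivative_at_within)
  moreover have "a * z ^ Suc n = C * (K * z) ^ Suc n / fact (Suc n)"
    by (simp add: a_def power_mult_distrib)
  ultimately show ?thesis
    using integral_norm_bound_integral[OF integrable_continuous_real[OF g]] bound
    by (metis integral_unique has_integral_integrable)
qed

lemma primitive_norm_le_power:
  fixes g :: "real \<Rightarrow> 'a::banach"
  assumes g: "continuous_on UNIV g"
    and bound: "\<And>s. norm (g s) \<le> C * K * (K * \<bar>s\<bar>) ^ n / fact n"
  shows "norm (primitive g z) \<le> C * (K * \<bar>z\<bar>) ^ Suc n / fact (Suc n)"
proof (cases "0 \<le> z")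
  case True
  have "norm (integral {0..z} g) \<le> C * (K * z) ^ Suc n / fact (Suc n)"
    by (rule integral_norm_le_power[OF continuous_on_subset[OF g _] True])
       (auto intro: order.trans[OF bound])
  then show ?thesis using True by (simp add: primitive_nonneg)
next
  case False
  have "continuous_on {0..-z} (\<lambda>s. g (- s))"
    by (intro continuous_on_compose2[OF g] continuous_intros) auto
  then have "norm (integral {0..-z} (\<lambda>s. g (- s))) \<le> C * (K * - z) ^ Suc n / fact (Suc n)"
    by (rule integral_norm_le_power)
       (use False in \<open>auto intro: order.trans[OF bound] simp: abs_of_nonneg\<close>)
  then show ?thesis
    using Henstock_Kurzweil_Integration.integral_reflect_real[of 0 z g] False
    by (simp add: primitive_nonpos)
qed

lemma summable_exp_bound: "summable (\<lambda>n. C * x ^ n / fact n :: real)"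
  using summable_mult[OF summable_exp, of C x] by (simp add: field_simps)

lemma has_vector_derivative_series:
  fixes f f' :: "nat \<Rightarrow> real \<Rightarrow> 'a::banach"
  assumes "open S" "convex S" "x \<in> S"
    and deriv: "\<And>n x. x \<in> S \<Longrightarrow> (f n has_vector_derivative f' n x) (at x)"
    and unif: "uniform_limit S (\<lambda>n x. \<Sum>i<n. f' i x) g' sequentially"
    and summable: "\<And>x. x \<in> S \<Longrightarrow> summable (\<lambda>n. f n x)"
  shows "((\<lambda>x. \<Sum>n. f n x) has_vector_derivative g' x) (at x)"
proof -
  have "\<exists>g. \<forall>x\<in>S. (\<lambda>n. f n x) sums g x \<and>
      (g has_derivative (\<lambda>h. h *\<^sub>R g' x)) (at x within S)"
  proof (rule has_derivative_series[OF \<open>convex S\<close> _ _ \<open>x \<in> S\<close>])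
    show "(f n has_derivative (\<lambda>h. h *\<^sub>R f' n y)) (at y within S)" if "y \<in> S" for n y
      using deriv[OF that] by (simp add: has_vector_derivative_def has_derivative_at_withinI)
    show "(\<lambda>n. f n x) sums (\<Sum>n. f n x)"
      using summable[OF \<open>x \<in> S\<close>] by (rule summable_sums)
    fix e :: real assume "0 < e"
    have "norm ((\<Sum>i<n. h *\<^sub>R f' i y) - h *\<^sub>R g' y) \<le> e * norm h"
      if "dist (\<Sum>i<n. f' i y) (g' y) < e" for n y h
      using that mult_left_mono[of "dist (\<Sum>i<n. f' i y) (g' y)" e "\<bar>h\<bar>"]
      by (simp add: dist_norm mult.commute flip: scaleR_sum_right scaleR_diff_right)
    then show "\<forall>\<^sub>F n in sequentially. \<forall>y\<in>S. \<forall>h.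
        norm ((\<Sum>i<n. h *\<^sub>R f' i y) - h *\<^sub>R g' y) \<le> e * norm h"
      using uniform_limitD[OF unif \<open>0 < e\<close>] by (auto elim!: eventually_mono)
  qed
  then obtain g where g: "\<And>y. y \<in> S \<Longrightarrow> (\<lambda>n. f n y) sums g y \<and>
      (g has_derivative (\<lambda>h. h *\<^sub>R g' y)) (at y within S)"
    by blast
  then have "(g has_derivative (\<lambda>h. h *\<^sub>R g' x)) (at x)"
    using at_within_open[OF \<open>x \<in> S\<close> \<open>open S\<close>] \<open>x \<in> S\<close> by metis
  then have "((\<lambda>x. \<Sum>n. f n x) has_derivative (\<lambda>h. h *\<^sub>R g' x)) (at x)"
    by (rule has_derivative_transform_within_open[OF _ \<open>open S\<close> \<open>x \<in> S\<close>])
       (use g in \<open>auto simp: sums_iff\<close>)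
  then show ?thesis by (simp add: has_vector_derivative_def)
qed

text \<open>The terms of the Picard series: their partial sums are the Picard iterates.\<close>

primrec picard_term :: "(real \<Rightarrow> 'a \<Rightarrow>\<^sub>L 'a) \<Rightarrow> 'a \<Rightarrow> nat \<Rightarrow> real \<Rightarrow> 'a::banach" where
  "picard_term A x0 0 = (\<lambda>_. x0)"
| "picard_term A x0 (Suc n) = primitive (\<lambda>s. A s (picard_term A x0 n s))"

context
  fixes A :: "real \<Rightarrow> 'a::banach \<Rightarrow>\<^sub>L 'a" and K :: real
  assumes A_cont: "continuous_on UNIV A" and A_bound: "\<And>z. norm (A z) \<le> K"
begin

private lemma K_nonneg: "0 \<le> K"
  using A_bound[of 0] norm_ge_zero order_trans by blast

private lemma norm_A_apply_le: "norm (A z x) \<le> K * norm x"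
  by (metis A_bound norm_blinfun norm_ge_zero mult_right_mono order.trans)

lemma picard_term_continuous_and_bound:
  "continuous_on UNIV (picard_term A x0 n) \<and>
   (\<forall>z. norm (picard_term A x0 n z) \<le> norm x0 * (K * \<bar>z\<bar>) ^ n / fact n)"
proof (induction n)
  case 0
  then show ?case by simp
next
  case (Suc n)
  then have g: "continuous_on UNIV (\<lambda>s. A s (picard_term A x0 n s))"
    by (auto intro: continuous_intros A_cont)
  have "(picard_term A x0 (Suc n) has_vector_derivative A z (picard_term A x0 n z)) (at z)" for z
    using primitive_has_vector_derivative[OF g] by simp
  then have "continuous_on UNIV (picard_term A x0 (Suc n))"
    by (meson continuous_at_imp_continuous_on has_vector_derivative_continuous)
  moreover have "norm (A s (picard_term A x0 n s)) \<le> norm x0 * K * (K * \<bar>s\<bar>) ^ n / fact n" for s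
  proof -
    have "norm (A s (picard_term A x0 n s)) \<le> K * norm (picard_term A x0 n s)"
      by (rule norm_A_apply_le)
    also have "\<dots> \<le> K * (norm x0 * (K * \<bar>s\<bar>) ^ n / fact n)"
      using Suc.IH A_bound[of s]
      by (intro mult_left_mono) (auto intro: order.trans[OF norm_ge_zero])
    finally show ?thesis by (simp add: mult_ac)
  qed
  then have "norm (picard_term A x0 (Suc n) z) \<le> norm x0 * (K * \<bar>z\<bar>) ^ Suc n / fact (Suc n)"
    for z
    using primitive_norm_le_power[OF g] by simp
  ultimately show ?case by blast
qed

lemma picard_term_norm_le:
  "norm (picard_term A x0 n z) \<le> norm x0 * (K * \<bar>z\<bar>) ^ n / fact n"
  using picard_term_continuous_and_bound by blast

lemma picard_term_Suc_has_vector_derivative: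
  "(picard_term A x0 (Suc n) has_vector_derivative A z (picard_term A x0 n z)) (at z)"
  unfolding picard_term.simps
  by (rule primitive_has_vector_derivative)
     (use picard_term_continuous_and_bound in \<open>auto intro: continuous_intros A_cont\<close>)

lemma picard_series_uniform_limit:
  assumes "\<And>x. x \<in> S \<Longrightarrow> \<bar>x\<bar> \<le> N"
  shows "uniform_limit S (\<lambda>m x. \<Sum>i<m. picard_term A x0 i x) (\<lambda>x. \<Sum>i. picard_term A x0 i x)
           sequentially"
proof (rule Weierstrass_m_test)
  show "summable (\<lambda>n. norm x0 * (K * N) ^ n / fact n)"
    by (rule summable_exp_bound)
  fix n x assume "x \<in> S"
  with assms have "(K * \<bar>x\<bar>) ^ n \<le> (K * N) ^ n"
    using K_nonneg by (intro power_mono mult_left_mono) auto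
  then show "norm (picard_term A x0 n x) \<le> norm x0 * (K * N) ^ n / fact n"
    using picard_term_norm_le[of x0 n x]
    by (meson divide_right_mono fact_ge_zero mult_left_mono norm_ge_zero order_trans)
qed

lemma picard_series_deriv_uniform_limit:
  assumes "\<And>x. x \<in> S \<Longrightarrow> \<bar>x\<bar> \<le> N"
  shows "uniform_limit S (\<lambda>n x. A x (\<Sum>i<n - 1. picard_term A x0 i x))
           (\<lambda>x. A x (\<Sum>i. picard_term A x0 i x)) sequentially"
proof (rule uniform_limitI)
  fix e :: real assume "0 < e"
  then have "0 < e / (K + 1)" using K_nonneg by simp
  from uniform_limitD[OF picard_series_uniform_limit[OF assms] this]
  obtain M where M: "\<forall>m\<ge>M. \<forall>x\<in>S.
      dist (\<Sum>i<m. picard_term A x0 i x) (\<Sum>i. picard_term A x0 i x) < e / (K + 1)"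
    unfolding eventually_sequentially ..
  have "dist (A x (\<Sum>i<n - 1. picard_term A x0 i x)) (A x (\<Sum>i. picard_term A x0 i x)) < e"
    if "Suc M \<le> n" "x \<in> S" for n x
  proof -
    have "dist (A x (\<Sum>i<n - 1. picard_term A x0 i x)) (A x (\<Sum>i. picard_term A x0 i x))
        \<le> K * dist (\<Sum>i<n - 1. picard_term A x0 i x) (\<Sum>i. picard_term A x0 i x)"
      unfolding dist_norm blinfun.diff_right[symmetric] by (rule norm_A_apply_le)
    also have "\<dots> \<le> K * (e / (K + 1))"
    proof (rule mult_left_mono[OF less_imp_le K_nonneg])
      show "dist (\<Sum>i<n - 1. picard_term A x0 i x) (\<Sum>i. picard_term A x0 i x) < e / (K + 1)"
        using M that by simp
    qed
    also have "\<dots> < e"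
      using \<open>0 < e\<close> K_nonneg by (simp add: field_simps)
    finally show ?thesis .
  qed
  then show "\<forall>\<^sub>F n in sequentially. \<forall>x\<in>S.
      dist (A x (\<Sum>i<n - 1. picard_term A x0 i x)) (A x (\<Sum>i. picard_term A x0 i x)) < e"
    unfolding eventually_sequentially by blast
qed

lemma picard_series_has_vector_derivative:
  "((\<lambda>z. \<Sum>n. picard_term A x0 n z) has_vector_derivative A z (\<Sum>n. picard_term A x0 n z))
     (at z)"
proof -
  define S where "S = {-(\<bar>z\<bar> + 1)<..<\<bar>z\<bar> + 1}"
  define D where "D n x = (case n of 0 \<Rightarrow> 0 | Suc m \<Rightarrow> A x (picard_term A x0 m x))" for n x
  have D_deriv: "(picard_term A x0 n has_vector_derivative D n x) (at x)" for n x
    by (cases n)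
       (use picard_term_Suc_has_vector_derivative
         in \<open>auto simp: D_def simp del: picard_term.simps(2)\<close>)
  have D_sum: "(\<Sum>i<n. D i x) = A x (\<Sum>i<n - 1. picard_term A x0 i x)" for n x
    by (cases n)
       (simp_all add: D_def sum.lessThan_Suc_shift blinfun.sum_right del: sum.lessThan_Suc)
  have "\<bar>x\<bar> \<le> \<bar>z\<bar> + 1" if "x \<in> S" for x
    using that by (auto simp: S_def)
  then have "uniform_limit S (\<lambda>n x. \<Sum>i<n. D i x) (\<lambda>x. A x (\<Sum>i. picard_term A x0 i x))
      sequentially"
    unfolding D_sum by (rule picard_series_deriv_uniform_limit)
  moreover have "summable (\<lambda>n. picard_term A x0 n x)" for x
    by (rule summable_comparison_test'[OF summable_exp_bound]) (rule picard_term_norm_le)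
  ultimately show ?thesis
    by (intro has_vector_derivative_series[where S = S]) (auto simp: S_def D_deriv)
qed

lemma linear_ode_exists:
  "\<exists>X. X 0 = x0 \<and> (\<forall>z. (X has_vector_derivative A z (X z)) (at z))"
proof (intro exI conjI allI)
  have "(\<lambda>n. picard_term A x0 n 0) sums x0"
    using sums_single[of 0 "\<lambda>_. x0"]
    by (rule sums_cong[THEN iffD1, rotated]) (auto simp: primitive_def gr0_conv_Suc)
  then show "(\<Sum>n. picard_term A x0 n 0) = x0" by (simp add: sums_iff)
qed (rule picard_series_has_vector_derivative)

end

lemma gronwall_upper:
  fixes N N' :: "real \<Rightarrow> real"
  assumes "a \<le> b"
    and deriv: "\<And>z. a \<le> z \<Longrightarrow> z \<le> b \<Longrightarrow> (N has_real_derivative N' z) (at z)"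
    and le: "\<And>z. a \<le> z \<Longrightarrow> z \<le> b \<Longrightarrow> N' z \<le> k * N z"
  shows "N b \<le> N a * exp (k * (b - a))"
proof -
  define Q where "Q z = N z * exp (- k * z)" for z
  have "Q b \<le> Q a"
  proof (rule DERIV_nonpos_imp_nonincreasing[OF \<open>a \<le> b\<close>])
    fix z assume z: "a \<le> z" "z \<le> b"
    have "(Q has_real_derivative (N' z - k * N z) * exp (- k * z)) (at z)"
      unfolding Q_def by (auto intro!: derivative_eq_intros deriv z simp: algebra_simps)
    moreover have "(N' z - k * N z) * exp (- k * z) \<le> 0"
      using le[OF z] by (simp add: mult_nonpos_nonneg)
    ultimately show "\<exists>y. (Q has_real_derivative y) (at z) \<and> y \<le> 0" by blast
  qed
  then have "N b * exp (- k * b) * exp (k * b) \<le> N a * exp (- k * a) * exp (k * b)"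
    unfolding Q_def by (intro mult_right_mono) auto
  then show ?thesis by (simp add: mult.assoc exp_add[symmetric] algebra_simps)
qed

lemma gronwall_lower:
  fixes N N' :: "real \<Rightarrow> real"
  assumes "a \<le> b"
    and deriv: "\<And>z. a \<le> z \<Longrightarrow> z \<le> b \<Longrightarrow> (N has_real_derivative N' z) (at z)"
    and ge: "\<And>z. a \<le> z \<Longrightarrow> z \<le> b \<Longrightarrow> k * N z \<le> N' z"
  shows "N a * exp (k * (b - a)) \<le> N b"
  using gronwall_upper[OF \<open>a \<le> b\<close>, of "\<lambda>z. - N z" "\<lambda>z. - N' z" k]
  by (auto intro!: derivative_eq_intros deriv simp: ge)

lemma has_real_derivative_inner_self:
  fixes X :: "real \<Rightarrow> 'a::real_inner"
  assumes "(X has_vector_derivative V) (at z)"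
  shows "((\<lambda>z. X z \<bullet> X z) has_real_derivative 2 * (X z \<bullet> V)) (at z)"
proof -
  have d: "(X has_derivative (\<lambda>h. h *\<^sub>R V)) (at z)"
    using assms by (simp add: has_vector_derivative_def)
  have "((\<lambda>z. X z \<bullet> X z) has_derivative (*) (2 * (X z \<bullet> V))) (at z)"
    by (rule has_derivative_eq_rhs[OF has_derivative_inner[OF d d]])
       (auto simp: fun_eq_iff inner_commute algebra_simps)
  then show ?thesis by (simp add: has_field_derivative_def)
qed

lemma linear_ode_zero_unique:
  fixes X :: "real \<Rightarrow> 'a::real_inner" and L :: "real \<Rightarrow> 'a \<Rightarrow> 'a"
  assumes deriv: "\<And>z. (X has_vector_derivative L z (X z)) (at z)"
    and bound: "\<And>z x. norm (L z x) \<le> K * norm x" and "X 0 = 0"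
  shows "X z = 0"
proof -
  define N where "N z = X z \<bullet> X z" for z
  have N_deriv: "(N has_real_derivative 2 * (X z \<bullet> L z (X z))) (at z)" for z
    unfolding N_def by (rule has_real_derivative_inner_self[OF deriv])
  have abs_le: "\<bar>X z \<bullet> L z (X z)\<bar> \<le> K * N z" for z
  proof -
    have "\<bar>X z \<bullet> L z (X z)\<bar> \<le> norm (X z) * (K * norm (X z))"
      using Cauchy_Schwarz_ineq2 bound by (metis mult_left_mono norm_ge_zero order_trans)
    then show ?thesis
      by (simp add: N_def power2_norm_eq_inner[symmetric] power2_eq_square mult_ac)
  qed
  have upper: "2 * (X z \<bullet> L z (X z)) \<le> 2 * K * N z"
    and lower: "(- 2 * K) * N z \<le> 2 * (X z \<bullet> L z (X z))" for z
    using abs_le[of z] unfolding abs_le_iff by linarith+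
  have "N 0 = 0" by (simp add: N_def \<open>X 0 = 0\<close>)
  have "N z \<le> 0"
  proof (cases "0 \<le> z")
    case True
    from gronwall_upper[OF True N_deriv upper] \<open>N 0 = 0\<close> show ?thesis by simp
  next
    case False
    from gronwall_lower[of z 0 N, OF _ N_deriv lower] \<open>N 0 = 0\<close> False show ?thesis
      by (simp add: mult_le_0_iff)
  qed
  then show ?thesis by (metis N_def inner_gt_zero_iff not_le)
qed

section \<open>The fundamental matrix of (P)\<close>

lemma bounded_linear_matrix_mult_left: "bounded_linear (\<lambda>H::complex^'k^'n. C ** H)"
proof -
  have "linear (\<lambda>H::complex^'k^'n. C ** H)"
    by (rule linearI)
       (simp_all add: matrix_add_ldistrib vec_eq_iff matrix_matrix_mult_def
         distrib_left sum.distrib mult_scaleR_right scaleR_sum_right)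
  then show ?thesis by (simp add: linear_conv_bounded_linear)
qed

definition matrix_mult_blinfun ::
  "complex^'n^'n \<Rightarrow> (complex^'n^'n) \<Rightarrow>\<^sub>L (complex^'n^'n)" where
  "matrix_mult_blinfun C = Blinfun (\<lambda>H. C ** H)"

lemma matrix_mult_blinfun_apply: "matrix_mult_blinfun C H = C ** H"
  by (simp add: matrix_mult_blinfun_def bounded_linear_Blinfun_apply
      bounded_linear_matrix_mult_left)

definition coeff_const :: "real \<Rightarrow> complex \<Rightarrow> complex^2^2" where
  "coeff_const c lam = (\<chi> i j. if i = 1 then (if j = 1 then 0 else 1)
     else (if j = 1 then - of_real (gam c) * lam\<^sup>2 else 2 * of_real c * of_real (gam c) * lam))"

definition coeff_cos :: "real \<Rightarrow> complex^2^2" where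
  "coeff_cos c = (\<chi> i j. if i = 1 then 0 else (if j = 1 then - of_real (gam c) else 0))"

text \<open>Splitting off the \<open>cos f\<close> part makes the coefficient operator visibly continuous
  and bounded.\<close>

definition coeff_blinfun ::
  "real \<Rightarrow> (real \<Rightarrow> real) \<Rightarrow> complex \<Rightarrow> real \<Rightarrow> (complex^2^2) \<Rightarrow>\<^sub>L (complex^2^2)" where
  "coeff_blinfun c f lam z =
     matrix_mult_blinfun (coeff_const c lam) + cos (f z) *\<^sub>R matrix_mult_blinfun (coeff_cos c)"

lemma coeff_blinfun_apply: "coeff_blinfun c f lam z H = coeff_matrix c f lam z ** H"
  by (simp add: coeff_blinfun_def plus_blinfun.rep_eq scaleR_blinfun.rep_eq
      matrix_mult_blinfun_apply vec_eq_iff matrix_matrix_mult_def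
      sum_2 forall_2 coeff_matrix_def coeff_const_def coeff_cos_def,
      simp add: scaleR_conv_of_real algebra_simps)

lemma norm_coeff_blinfun_le:
  "norm (coeff_blinfun c f lam z) \<le>
     norm (matrix_mult_blinfun (coeff_const c lam)) + norm (matrix_mult_blinfun (coeff_cos c))"
proof -
  have "norm (coeff_blinfun c f lam z) \<le> norm (matrix_mult_blinfun (coeff_const c lam))
      + \<bar>cos (f z)\<bar> * norm (matrix_mult_blinfun (coeff_cos c))"
    unfolding coeff_blinfun_def by (rule order.trans[OF norm_triangle_ineq]) simp
  also have "\<dots> \<le>
      norm (matrix_mult_blinfun (coeff_const c lam)) + norm (matrix_mult_blinfun (coeff_cos c))"
    by (intro add_left_mono mult_left_le_one_le) auto
  finally show ?thesis .
qed

lemma traveling_wave_continuous: "traveling_wave c f \<Longrightarrow> continuous_on UNIV f"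
  unfolding traveling_wave_def by (meson DERIV_isCont continuous_at_imp_continuous_on)

lemma fundamental_matrix_exists:
  assumes "traveling_wave c f"
  obtains F where "is_fundamental_matrix c f lam F"
proof -
  have "continuous_on UNIV (coeff_blinfun c f lam)"
    unfolding coeff_blinfun_def
    by (intro continuous_intros traveling_wave_continuous[OF assms])
  from linear_ode_exists[OF this norm_coeff_blinfun_le]
  show ?thesis
    using that unfolding is_fundamental_matrix_def coeff_blinfun_apply by blast
qed

lemma fundamental_matrix_unique:
  assumes F: "is_fundamental_matrix c f lam F" and G: "is_fundamental_matrix c f lam G"
  shows "F = G"
proof
  fix z
  define K where
    "K = norm (matrix_mult_blinfun (coeff_const c lam)) + norm (matrix_mult_blinfun (coeff_cos c))"
  have "((\<lambda>z. F z - G z) has_vector_derivative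
      coeff_matrix c f lam z ** F z - coeff_matrix c f lam z ** G z) (at z)" for z
    using F G unfolding is_fundamental_matrix_def by (intro derivative_intros) auto
  then have "((\<lambda>z. F z - G z) has_vector_derivative coeff_blinfun c f lam z (F z - G z)) (at z)" for z
    by (simp add: blinfun.diff_right coeff_blinfun_apply)
  moreover have "norm (coeff_blinfun c f lam z H) \<le> K * norm H" for z H
    unfolding K_def
    by (rule order.trans[OF norm_blinfun mult_right_mono[OF norm_coeff_blinfun_le norm_ge_zero]])
  moreover have "F 0 - G 0 = 0" using F G unfolding is_fundamental_matrix_def by simp
  ultimately have "F z - G z = 0" by (rule linear_ode_zero_unique)
  then show "F z = G z" by simp
qed

lemma monodromy_eq:
  assumes "is_fundamental_matrix c f lam F"
  shows "monodromy c f T lam = F T"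
  unfolding monodromy_def
  using assms fundamental_matrix_unique[OF assms] by blast

lemma fundamental_matrix_entry_deriv:
  assumes "is_fundamental_matrix c f lam F"
  shows "((\<lambda>z. F z $ 1 $ j) has_vector_derivative F z $ 2 $ j) (at z)"
    and "((\<lambda>z. F z $ 2 $ j) has_vector_derivative
           - of_real (gam c) * (lam\<^sup>2 + of_real (cos (f z))) * F z $ 1 $ j
           + 2 * of_real c * of_real (gam c) * lam * F z $ 2 $ j) (at z)"
proof -
  have entry: "((\<lambda>z. F z $ i $ j) has_vector_derivative (coeff_matrix c f lam z ** F z) $ i $ j)
      (at z)" for i
    using assms unfolding is_fundamental_matrix_def
    by (intro bounded_linear.has_vector_derivative[where f = "\<lambda>M. M $ i $ j"]
        bounded_linear_compose[OF bounded_linear_vec_nth bounded_linear_vec_nth]) auto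
  show "((\<lambda>z. F z $ 1 $ j) has_vector_derivative F z $ 2 $ j) (at z)"
    using entry[of 1] by (simp add: matrix_matrix_mult_def sum_2 coeff_matrix_def)
  show "((\<lambda>z. F z $ 2 $ j) has_vector_derivative
           - of_real (gam c) * (lam\<^sup>2 + of_real (cos (f z))) * F z $ 1 $ j
           + 2 * of_real c * of_real (gam c) * lam * F z $ 2 $ j) (at z)"
    using entry[of 2] by (simp add: matrix_matrix_mult_def sum_2 coeff_matrix_def)
qed

lemma det_fundamental_matrix:
  assumes F: "is_fundamental_matrix c f lam F"
  shows "det (F z) = exp (z *\<^sub>R (2 * of_real c * of_real (gam c) * lam))"
proof -
  define a where "a = 2 * of_real c * of_real (gam c) * lam"
  define D where "D z = F z $ 1 $ 1 * F z $ 2 $ 2 - F z $ 1 $ 2 * F z $ 2 $ 1" for z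
  have "(D has_vector_derivative a * D z) (at z)" for z
    unfolding D_def
    by (rule derivative_eq_intros fundamental_matrix_entry_deriv[OF F] refl)+
       (simp add: a_def algebra_simps)
  then have "((\<lambda>z. D z - exp (z *\<^sub>R a)) has_vector_derivative a * (D z - exp (z *\<^sub>R a))) (at z)"
    for z
    by (auto intro!: derivative_eq_intros exp_scaleR_has_vector_derivative_right simp: algebra_simps)
  moreover have "norm (a * x) \<le> cmod a * norm x" for x
    by (simp add: norm_mult)
  moreover have "D 0 - exp (0 *\<^sub>R a) = 0"
    using F by (simp add: is_fundamental_matrix_def D_def mat_def)
  ultimately have "D z - exp (z *\<^sub>R a) = 0"
    by (rule linear_ode_zero_unique[where L = "\<lambda>_ x. a * x"])
  then show ?thesis by (simp add: det_2 D_def a_def)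
qed

section \<open>Diagonalisation and cone estimates\<close>

text \<open>The roots of \<open>\<mu>\<^sup>2 - 2 c \<gamma> \<lambda> \<mu> + \<gamma> \<lambda>\<^sup>2 = 0\<close>, the characteristic equation of (P)
  with the bounded term \<open>\<gamma> cos f\<close> dropped.\<close>

definition mu1 :: "real \<Rightarrow> complex \<Rightarrow> complex" where "mu1 c lam = lam / of_real (c - 1)"
definition mu2 :: "real \<Rightarrow> complex \<Rightarrow> complex" where "mu2 c lam = lam / of_real (c + 1)"

lemma sq_ne_one_factors: "c\<^sup>2 \<noteq> (1::real) \<Longrightarrow> c - 1 \<noteq> 0 \<and> c + 1 \<noteq> 0"
  using power2_eq_1_iff[of c] by auto

lemma gam_eq: "gam c = 1 / ((c - 1) * (c + 1))"
  by (simp add: gam_def power2_eq_square algebra_simps)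

lemma mu_sum_prod_diff:
  assumes "c\<^sup>2 \<noteq> 1"
  shows "mu1 c lam + mu2 c lam = 2 * of_real c * of_real (gam c) * lam"
    and "mu1 c lam * mu2 c lam = of_real (gam c) * lam\<^sup>2"
    and "mu1 c lam - mu2 c lam = 2 * of_real (gam c) * lam"
proof -
  have ne: "complex_of_real c - 1 \<noteq> 0" "complex_of_real c + 1 \<noteq> 0"
    using sq_ne_one_factors[OF assms]
    by (metis of_real_1 of_real_diff of_real_add of_real_eq_0_iff)+
  have "complex_of_real (gam c) = 1 / ((of_real c - 1) * (of_real c + 1))"
    by (simp add: gam_eq)
  with ne show "mu1 c lam + mu2 c lam = 2 * of_real c * of_real (gam c) * lam"
    and "mu1 c lam * mu2 c lam = of_real (gam c) * lam\<^sup>2"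
    and "mu1 c lam - mu2 c lam = 2 * of_real (gam c) * lam"
    by (simp_all add: mu1_def mu2_def field_simps power2_eq_square)
qed

lemma diagonal_form:
  fixes p q :: "real \<Rightarrow> complex" and \<phi> :: "real \<Rightarrow> real"
  assumes c: "c\<^sup>2 \<noteq> 1" and "lam \<noteq> 0"
    and p: "\<And>z. (p has_vector_derivative q z) (at z)"
    and q: "\<And>z. (q has_vector_derivative - of_real (gam c) * (lam\<^sup>2 + of_real (\<phi> z)) * p z
                    + 2 * of_real c * of_real (gam c) * lam * q z) (at z)"
  defines "u \<equiv> \<lambda>z. q z - mu2 c lam * p z" and "v \<equiv> \<lambda>z. q z - mu1 c lam * p z"
    and "g \<equiv> \<lambda>z. of_real (\<phi> z) / (2 * lam)"
  shows "(u has_vector_derivative (mu1 c lam - g z) * u z + g z * v z) (at z)"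
    and "(v has_vector_derivative (mu2 c lam + g z) * v z - g z * u z) (at z)"
proof -
  note mu = mu_sum_prod_diff[OF c, of lam]
  have g: "g z * (mu1 c lam - mu2 c lam) = of_real (gam c) * of_real (\<phi> z)"
    unfolding mu(3) g_def using \<open>lam \<noteq> 0\<close> by (simp add: field_simps)
  have "(u has_vector_derivative - of_real (gam c) * (lam\<^sup>2 + of_real (\<phi> z)) * p z
      + 2 * of_real c * of_real (gam c) * lam * q z - mu2 c lam * q z) (at z)"
    unfolding u_def by (intro derivative_intros p q)
  moreover have "- of_real (gam c) * (lam\<^sup>2 + of_real (\<phi> z)) * p z
      + 2 * of_real c * of_real (gam c) * lam * q z - mu2 c lam * q z
      = (mu1 c lam - g z) * u z + g z * v z"
    unfolding u_def v_def using mu(1,2) g by algebra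
  ultimately show "(u has_vector_derivative (mu1 c lam - g z) * u z + g z * v z) (at z)"
    by simp
  have "(v has_vector_derivative - of_real (gam c) * (lam\<^sup>2 + of_real (\<phi> z)) * p z
      + 2 * of_real c * of_real (gam c) * lam * q z - mu1 c lam * q z) (at z)"
    unfolding v_def by (intro derivative_intros p q)
  moreover have "- of_real (gam c) * (lam\<^sup>2 + of_real (\<phi> z)) * p z
      + 2 * of_real c * of_real (gam c) * lam * q z - mu1 c lam * q z
      = (mu2 c lam + g z) * v z - g z * u z"
    unfolding u_def v_def using mu(1,2) g by algebra
  ultimately show "(v has_vector_derivative (mu2 c lam + g z) * v z - g z * u z) (at z)"
    by simp
qed

lemma inner_mult_right_self: "(x::complex) \<bullet> (a * x) = Re a * (x \<bullet> x)"
  by (simp add: inner_complex_def algebra_simps)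

lemma abs_inner_mult_le:
  assumes "cmod g \<le> \<epsilon>"
  shows "\<bar>(x::complex) \<bullet> (g * y)\<bar> \<le> \<epsilon> * (norm x * norm y)"
proof -
  have "\<bar>x \<bullet> (g * y)\<bar> \<le> norm x * norm (g * y)" by (rule Cauchy_Schwarz_ineq2)
  also have "\<dots> = cmod g * (norm x * norm y)" by (simp add: norm_mult)
  also have "\<dots> \<le> \<epsilon> * (norm x * norm y)" using assms by (intro mult_right_mono) auto
  finally show ?thesis .
qed

lemma exp_double_le_sq_iff:
  fixes k r :: real
  assumes "0 \<le> r"
  shows "exp (2 * k) \<le> r\<^sup>2 \<longleftrightarrow> exp k \<le> r" and "r\<^sup>2 \<le> exp (2 * k) \<longleftrightarrow> r \<le> exp k"
proof -
  have "exp (2 * k) = (exp k)\<^sup>2" by (simp add: power2_eq_square exp_add[symmetric])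
  then show "exp (2 * k) \<le> r\<^sup>2 \<longleftrightarrow> exp k \<le> r" and "r\<^sup>2 \<le> exp (2 * k) \<longleftrightarrow> r \<le> exp k"
    using assms by (simp_all add: power2_le_iff_abs_le abs_le_square_iff)
qed

definition exp_window :: "real \<Rightarrow> real \<Rightarrow> real \<Rightarrow> real \<Rightarrow> bool" where
  "exp_window T m \<epsilon> r \<longleftrightarrow> exp ((m - 2 * \<epsilon>) * T) \<le> r \<and> r \<le> exp ((m + 2 * \<epsilon>) * T)"

lemma dominant_component_growth:
  fixes u v g :: "real \<Rightarrow> complex" and m \<rho> :: complex
  assumes u: "\<And>z. (u has_vector_derivative (m - g z) * u z + g z * v z) (at z)"
    and g: "\<And>z. cmod (g z) \<le> \<epsilon>"
    and dominant: "\<And>z. 0 \<le> z \<Longrightarrow> z \<le> T \<Longrightarrow> norm (v z) \<le> norm (u z)"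
    and "0 \<le> T" and uT: "u T = \<rho> * u 0" and "u 0 \<noteq> 0"
  shows "exp_window T (Re m) \<epsilon> (cmod \<rho>)"
proof -
  define U where "U z = u z \<bullet> u z" for z
  define U' where "U' z = 2 * (u z \<bullet> ((m - g z) * u z + g z * v z))" for z
  have U_deriv: "(U has_real_derivative U' z) (at z)" for z
    unfolding U_def U'_def by (rule has_real_derivative_inner_self[OF u])
  have U'_near: "\<bar>U' z - 2 * Re m * U z\<bar> \<le> 4 * (\<epsilon> * U z)" if "0 \<le> z" "z \<le> T" for z
  proof -
    have "U' z - 2 * Re m * U z = 2 * (u z \<bullet> (g z * v z) - Re (g z) * U z)"
      by (simp add: U_def U'_def inner_add_right inner_mult_right_self algebra_simps)
    moreover have "\<bar>u z \<bullet> (g z * v z)\<bar> \<le> \<epsilon> * (norm (u z) * norm (v z))"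
      by (rule abs_inner_mult_le[OF g])
    moreover have "\<epsilon> * (norm (u z) * norm (v z)) \<le> \<epsilon> * U z"
      unfolding U_def power2_norm_eq_inner[symmetric] power2_eq_square
      using dominant[OF that] order.trans[OF norm_ge_zero g] by (intro mult_left_mono) auto
    moreover have "\<bar>Re (g z) * U z\<bar> \<le> \<epsilon> * U z"
      using abs_Re_le_cmod[of "g z"] g[of z] by (simp add: U_def abs_mult mult_right_mono)
    ultimately show ?thesis unfolding abs_le_iff by (smt (verit))
  qed
  have lower: "U 0 * exp (2 * (Re m - 2 * \<epsilon>) * (T - 0)) \<le> U T"
    by (rule gronwall_lower[OF \<open>0 \<le> T\<close> U_deriv])
       (use U'_near in \<open>auto simp: abs_le_iff algebra_simps\<close>)
  have upper: "U T \<le> U 0 * exp (2 * (Re m + 2 * \<epsilon>) * (T - 0))"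
    by (rule gronwall_upper[OF \<open>0 \<le> T\<close> U_deriv])
       (use U'_near in \<open>auto simp: abs_le_iff algebra_simps\<close>)
  have "U T = (cmod \<rho>)\<^sup>2 * U 0" and "U 0 > 0"
    using \<open>u 0 \<noteq> 0\<close>
    by (simp_all add: U_def uT norm_mult power_mult_distrib flip: power2_norm_eq_inner)
  with lower upper have "exp (2 * ((Re m - 2 * \<epsilon>) * T)) \<le> (cmod \<rho>)\<^sup>2"
    and "(cmod \<rho>)\<^sup>2 \<le> exp (2 * ((Re m + 2 * \<epsilon>) * T))"
    by (simp_all add: mult.commute mult.left_commute)
  then show ?thesis by (simp add: exp_window_def exp_double_le_sq_iff)
qed

lemma norm_sq_difference_le_exp:
  fixes u v g :: "real \<Rightarrow> complex" and m1 m2 :: complex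
  assumes u: "\<And>z. (u has_vector_derivative (m1 - g z) * u z + g z * v z) (at z)"
    and v: "\<And>z. (v has_vector_derivative (m2 + g z) * v z - g z * u z) (at z)"
    and g: "\<And>z. cmod (g z) \<le> \<epsilon>"
    and gap: "4 * \<epsilon> \<le> Re m1 - Re m2" and "a \<le> b"
  defines "W \<equiv> \<lambda>z. v z \<bullet> v z - u z \<bullet> u z"
  shows "W b \<le> W a * exp (2 * (Re m2 + 2 * \<epsilon>) * (b - a))"
proof (rule gronwall_upper[OF \<open>a \<le> b\<close>])
  fix z
  define U V where "U = u z \<bullet> u z" and "V = v z \<bullet> v z"
  define W' where "W' = 2 * (v z \<bullet> ((m2 + g z) * v z - g z * u z))
    - 2 * (u z \<bullet> ((m1 - g z) * u z + g z * v z))"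
  show "(W has_real_derivative W') (at z)"
    unfolding W_def W'_def
    by (intro derivative_intros has_real_derivative_inner_self u v)
  have "0 \<le> \<epsilon>" using order.trans[OF norm_ge_zero g] .
  have W': "W' = 2 * (Re m2 * V - Re m1 * U + Re (g z) * (U + V)
      - v z \<bullet> (g z * u z) - u z \<bullet> (g z * v z))"
    by (simp add: W'_def U_def V_def inner_add_right inner_diff_right inner_mult_right_self
        algebra_simps)
  have cross: "\<bar>v z \<bullet> (g z * u z)\<bar> \<le> \<epsilon> * (norm (u z) * norm (v z))"
    "\<bar>u z \<bullet> (g z * v z)\<bar> \<le> \<epsilon> * (norm (u z) * norm (v z))"
    using abs_inner_mult_le[OF g] by (metis mult.commute)+
  have "2 * (norm (u z) * norm (v z)) \<le> U + V"
    using sum_squares_bound[of "norm (u z)" "norm (v z)"]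
    by (simp add: U_def V_def mult.assoc flip: power2_norm_eq_inner)
  then have "2 * (\<epsilon> * (norm (u z) * norm (v z))) \<le> \<epsilon> * (U + V)"
    using \<open>0 \<le> \<epsilon>\<close> by (metis mult.left_commute mult_left_mono)
  moreover have "\<bar>Re (g z) * (U + V)\<bar> \<le> \<epsilon> * (U + V)"
    using abs_Re_le_cmod[of "g z"] g[of z] by (simp add: U_def V_def abs_mult mult_right_mono)
  moreover have "0 \<le> (Re m1 - Re m2 - 4 * \<epsilon>) * U"
    using gap by (simp add: U_def)
  ultimately show "W' \<le> 2 * (Re m2 + 2 * \<epsilon>) * W z"
    unfolding W' W_def U_def[symmetric] V_def[symmetric] using cross
    by (simp add: algebra_simps abs_le_iff)
qed

text \<open>The cone argument: \<open>|v|\<^sup>2 - |u|\<^sup>2\<close> can only change sign from positive to nonpositive, so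
  an eigensolution stays on all of \<open>[0, T]\<close> in one of the cones \<open>|v| \<le> |u|\<close>, \<open>|u| \<le> |v|\<close>, where
  the dominant component grows like \<open>exp (T Re m\<^sub>i)\<close>.\<close>

lemma multiplier_modulus_bounds:
  fixes u v g :: "real \<Rightarrow> complex" and m1 m2 \<rho> :: complex
  assumes u: "\<And>z. (u has_vector_derivative (m1 - g z) * u z + g z * v z) (at z)"
    and v: "\<And>z. (v has_vector_derivative (m2 + g z) * v z - g z * u z) (at z)"
    and g: "\<And>z. cmod (g z) \<le> \<epsilon>"
    and gap: "4 * \<epsilon> \<le> Re m1 - Re m2"
    and "0 \<le> T" and uT: "u T = \<rho> * u 0" and vT: "v T = \<rho> * v 0"
    and nontrivial: "u 0 \<noteq> 0 \<or> v 0 \<noteq> 0" and "\<rho> \<noteq> 0"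
  shows "exp_window T (Re m1) \<epsilon> (cmod \<rho>) \<or>
         exp_window T (Re m2) \<epsilon> (cmod \<rho>)"
proof -
  define W where "W z = v z \<bullet> v z - u z \<bullet> u z" for z
  define \<beta> where "\<beta> = 2 * (Re m2 + 2 * \<epsilon>)"
  have growth: "W b \<le> W a * exp (\<beta> * (b - a))" if "a \<le> b" for a b
    unfolding W_def \<beta>_def by (rule norm_sq_difference_le_exp[OF u v g gap that])
  have W_le_0: "W z \<le> 0 \<longleftrightarrow> norm (v z) \<le> norm (u z)" for z
    by (simp add: W_def abs_le_square_iff[symmetric] flip: power2_norm_eq_inner)
  have "W T = (cmod \<rho>)\<^sup>2 * W 0"
    by (simp add: W_def uT vT norm_mult power_mult_distrib algebra_simps
        flip: power2_norm_eq_inner)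
  consider "W 0 \<le> 0" | "0 < W 0" by linarith
  then show ?thesis
  proof cases
    case 1
    have "W z \<le> 0" if "0 \<le> z" for z
      using growth[OF that] 1 by (smt (verit) exp_gt_zero mult_nonpos_nonneg)
    then have "norm (v z) \<le> norm (u z)" if "0 \<le> z" for z
      using that W_le_0 by blast
    moreover have "u 0 \<noteq> 0" using nontrivial calculation[of 0] by auto
    ultimately show ?thesis
      using dominant_component_growth[OF u g _ \<open>0 \<le> T\<close> uT] by blast
  next
    case 2
    with \<open>W T = (cmod \<rho>)\<^sup>2 * W 0\<close> \<open>\<rho> \<noteq> 0\<close> have "0 < W T" by simp
    then have "0 < W z" if "z \<le> T" for z
      using growth[OF that] by (smt (verit) exp_gt_zero zero_less_mult_iff)
    then have "norm (u z) \<le> norm (v z)" if "z \<le> T" for z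
      using that W_le_0[of z] by fastforce
    moreover have "v 0 \<noteq> 0" using 2 by (auto simp: W_def) (meson inner_ge_zero not_le)
    moreover have "(v has_vector_derivative (m2 - (- g z)) * v z + (- g z) * u z) (at z)" for z
      using v[of z] by (simp add: algebra_simps)
    ultimately show ?thesis
      using dominant_component_growth[of v m2 "\<lambda>z. - g z" u \<epsilon> T \<rho>] g \<open>0 \<le> T\<close> vT by auto
  qed
qed

lemma multiplier_modulus_bounds_abs:
  fixes u v g :: "real \<Rightarrow> complex" and m1 m2 \<rho> :: complex
  assumes u: "\<And>z. (u has_vector_derivative (m1 - g z) * u z + g z * v z) (at z)"
    and v: "\<And>z. (v has_vector_derivative (m2 + g z) * v z - g z * u z) (at z)"
    and g: "\<And>z. cmod (g z) \<le> \<epsilon>"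
    and gap: "4 * \<epsilon> \<le> \<bar>Re m1 - Re m2\<bar>"
    and "0 \<le> T" and uT: "u T = \<rho> * u 0" and vT: "v T = \<rho> * v 0"
    and nontrivial: "u 0 \<noteq> 0 \<or> v 0 \<noteq> 0" and "\<rho> \<noteq> 0"
  shows "exp_window T (Re m1) \<epsilon> (cmod \<rho>) \<or>
         exp_window T (Re m2) \<epsilon> (cmod \<rho>)"
proof (cases "Re m2 \<le> Re m1")
  case True
  with gap have "4 * \<epsilon> \<le> Re m1 - Re m2" by simp
  from multiplier_modulus_bounds[OF u v g this assms(5-)] show ?thesis .
next
  case False
  with gap have "4 * \<epsilon> \<le> Re m2 - Re m1" by simp
  moreover have "(v has_vector_derivative (m2 - (- g z)) * v z + (- g z) * u z) (at z)"
    and "(u has_vector_derivative (m1 + (- g z)) * u z - (- g z) * v z) (at z)" for z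
    using u[of z] v[of z] by (simp_all add: algebra_simps)
  ultimately show ?thesis
    using multiplier_modulus_bounds[of v m2 "\<lambda>z. - g z" u m1 \<epsilon> T \<rho>] g assms(5-) by auto
qed

section \<open>Floquet multipliers\<close>

lemma det_eq_0_imp_kernel:
  fixes A :: "'a::field^'n^'n"
  assumes "det A = 0"
  obtains x where "x \<noteq> 0" "A *v x = 0"
  using assms invertible_det_nz invertible_left_inverse matrix_left_invertible_ker by metis

lemma char_poly_2x2_factors:
  fixes M :: "complex^2^2"
  shows "\<exists>r1 r2. \<forall>x. det (mat x - M) = (x - r1) * (x - r2)"
proof -
  define tr where "tr = M $ 1 $ 1 + M $ 2 $ 2"
  define dt where "dt = M $ 1 $ 1 * M $ 2 $ 2 - M $ 1 $ 2 * M $ 2 $ 1"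
  define s where "s = csqrt (tr\<^sup>2 - 4 * dt)"
  have "det (mat x - M) = (x - (tr + s) / 2) * (x - (tr - s) / 2)" for x
  proof -
    have "(x - (tr + s) / 2) * (x - (tr - s) / 2) = x\<^sup>2 - tr * x + (tr\<^sup>2 - s\<^sup>2) / 4"
      by (simp add: field_simps power2_eq_square)
    also have "\<dots> = x\<^sup>2 - tr * x + dt" by (simp add: s_def)
    finally show ?thesis
      by (simp add: tr_def dt_def det_2 mat_def power2_eq_square algebra_simps)
  qed
  then show ?thesis by blast
qed

lemma floquet_multipliers_char_poly:
  assumes "floquet_multipliers c f T lam = (r1, r2)"
  shows "det (mat x - monodromy c f T lam) = (x - r1) * (x - r2)"
proof -
  define P where
    "P = (\<lambda>(r1, r2). \<forall>x::complex. det (mat x - monodromy c f T lam) = (x - r1) * (x - r2))"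
  have "\<exists>p. P p"
    using char_poly_2x2_factors[of "monodromy c f T lam"] unfolding P_def by simp
  then have "P (SOME p. P p)" by (rule someI_ex)
  moreover have "(SOME p. P p) = (r1, r2)"
    using assms unfolding floquet_multipliers_def P_def .
  ultimately show ?thesis unfolding P_def by simp
qed

lemma floquet_multiplier_modulus_bounds:
  fixes r :: complex
  assumes c: "c\<^sup>2 \<noteq> 1" and F: "is_fundamental_matrix c f lam F" and "0 \<le> T" and "lam \<noteq> 0"
    and det: "det (mat r - F T) = 0" and "r \<noteq> 0"
  defines "\<epsilon> \<equiv> 1 / (2 * cmod lam)"
  assumes gap: "4 * \<epsilon> \<le> \<bar>Re (mu1 c lam) - Re (mu2 c lam)\<bar>"
  shows "exp_window T (Re (mu1 c lam)) \<epsilon> (cmod r) \<or>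
         exp_window T (Re (mu2 c lam)) \<epsilon> (cmod r)"
proof -
  obtain x where "x \<noteq> 0" and "(mat r - F T) *v x = 0"
    using det_eq_0_imp_kernel[OF det] .
  then have eigen: "F T *v x = r *s x"
    by (simp add: vec_eq_iff forall_2 matrix_vector_mult_def mat_def sum_2 algebra_simps)
  define p where "p z = F z $ 1 $ 1 * x $ 1 + F z $ 1 $ 2 * x $ 2" for z
  define q where "q z = F z $ 2 $ 1 * x $ 1 + F z $ 2 $ 2 * x $ 2" for z
  define u where "u z = q z - mu2 c lam * p z" for z
  define v where "v z = q z - mu1 c lam * p z" for z
  define g where "g z = complex_of_real (cos (f z)) / (2 * lam)" for z
  have "(p has_vector_derivative q z) (at z)" for z
    unfolding p_def q_def by (rule derivative_eq_intros fundamental_matrix_entry_deriv[OF F] refl)+ simp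
  moreover have "(q has_vector_derivative - of_real (gam c) * (lam\<^sup>2 + of_real (cos (f z))) * p z
      + 2 * of_real c * of_real (gam c) * lam * q z) (at z)" for z
    unfolding p_def q_def
    by (rule derivative_eq_intros fundamental_matrix_entry_deriv[OF F] refl)+ (simp add: algebra_simps)
  ultimately have u: "(u has_vector_derivative (mu1 c lam - g z) * u z + g z * v z) (at z)"
    and v: "(v has_vector_derivative (mu2 c lam + g z) * v z - g z * u z) (at z)" for z
    unfolding u_def v_def g_def by (rule diagonal_form[OF c \<open>lam \<noteq> 0\<close>])+
  have g: "cmod (g z) \<le> \<epsilon>" for z
    using \<open>lam \<noteq> 0\<close> by (simp add: g_def \<epsilon>_def norm_divide divide_right_mono)
  have "p 0 = x $ 1" "q 0 = x $ 2" "p T = r * p 0" "q T = r * q 0"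
    using F eigen by (auto simp: p_def q_def is_fundamental_matrix_def mat_def
        matrix_vector_mult_def sum_2 vec_eq_iff forall_2)
  then have uT: "u T = r * u 0" and vT: "v T = r * v 0"
    by (simp_all add: u_def v_def algebra_simps)
  have "gam c \<noteq> 0" using c by (simp add: gam_def)
  then have "mu1 c lam \<noteq> mu2 c lam"
    using mu_sum_prod_diff(3)[OF c, of lam] \<open>lam \<noteq> 0\<close> by auto
  then have nontrivial: "u 0 \<noteq> 0 \<or> v 0 \<noteq> 0"
    using \<open>x \<noteq> 0\<close> \<open>p 0 = x $ 1\<close> \<open>q 0 = x $ 2\<close>
    by (auto simp: u_def v_def vec_eq_iff forall_2)
  from multiplier_modulus_bounds_abs[OF u v g gap \<open>0 \<le> T\<close> uT vT nontrivial \<open>r \<noteq> 0\<close>]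
  show ?thesis .
qed

lemma floquet_multipliers_of_fundamental_matrix:
  assumes c: "c\<^sup>2 \<noteq> 1" and F: "is_fundamental_matrix c f lam F"
    and r: "floquet_multipliers c f T lam = (r1, r2)"
  shows "cmod r1 * cmod r2 = exp ((Re (mu1 c lam) + Re (mu2 c lam)) * T)"
    and "det (mat r1 - F T) = 0"
proof -
  have char: "det (mat x - F T) = (x - r1) * (x - r2)" for x
    using floquet_multipliers_char_poly[OF r] monodromy_eq[OF F] by simp
  have "r1 * r2 = det (F T)"
    using char[of 0] by (simp add: det_2 mat_def)
  also have "\<dots> = exp (T *\<^sub>R (mu1 c lam + mu2 c lam))"
    by (simp only: det_fundamental_matrix[OF F] mu_sum_prod_diff(1)[OF c])
  finally have "cmod (r1 * r2) = cmod (exp (T *\<^sub>R (mu1 c lam + mu2 c lam)))"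
    by (rule arg_cong)
  then show "cmod r1 * cmod r2 = exp ((Re (mu1 c lam) + Re (mu2 c lam)) * T)"
    by (simp add: norm_mult mult.commute)
  show "det (mat r1 - F T) = 0"
    using char[of r1] by simp
qed

lemma Re_mu: "Re (mu1 c lam) = Re lam / (c - 1)" "Re (mu2 c lam) = Re lam / (c + 1)"
  by (simp_all add: mu1_def mu2_def Re_divide_of_real)

lemma large_Re_separates_mu:
  assumes c: "c\<^sup>2 \<noteq> 1" and large: "\<bar>c\<^sup>2 - 1\<bar> + \<bar>c\<bar> + 2 < \<bar>Re lam\<bar>"
  defines "\<epsilon> \<equiv> 1 / (2 * cmod lam)"
  shows "lam \<noteq> 0" and "4 * \<epsilon> \<le> \<bar>Re (mu1 c lam) - Re (mu2 c lam)\<bar>"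
    and "2 * \<epsilon> < \<bar>Re (mu1 c lam)\<bar>" and "2 * \<epsilon> < \<bar>Re (mu2 c lam)\<bar>"
proof -
  define x where "x = \<bar>Re lam\<bar>"
  have "1 < x" using large by (simp add: x_def)
  then show "lam \<noteq> 0" by (auto simp: x_def)
  have "2 * \<epsilon> \<le> 1 / x"
    using \<open>1 < x\<close> abs_Re_le_cmod[of lam] by (simp add: \<epsilon>_def x_def frac_le)
  also have "\<dots> < 1" using \<open>1 < x\<close> by simp
  also have "\<dots> < x / d" if "0 < d" "d < x" for d
    using that by simp
  finally have sep: "2 * \<epsilon> < x / d" if "0 < d" "d < x" for d
    using that by blast
  have ne: "c - 1 \<noteq> 0" "c + 1 \<noteq> 0" using sq_ne_one_factors[OF c] by auto
  have "\<bar>Re (mu1 c lam) - Re (mu2 c lam)\<bar> = 2 * (x / \<bar>c\<^sup>2 - 1\<bar>)"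
    using ne by (simp add: Re_mu x_def field_simps power2_eq_square abs_mult)
  moreover have "2 * \<epsilon> < x / \<bar>c\<^sup>2 - 1\<bar>"
    using c large by (intro sep) (auto simp: x_def)
  ultimately show "4 * \<epsilon> \<le> \<bar>Re (mu1 c lam) - Re (mu2 c lam)\<bar>" by linarith
  show "2 * \<epsilon> < \<bar>Re (mu1 c lam)\<bar>" "2 * \<epsilon> < \<bar>Re (mu2 c lam)\<bar>"
    using sep[of "\<bar>c - 1\<bar>"] sep[of "\<bar>c + 1\<bar>"] ne large
    by (auto simp: Re_mu x_def)
qed

lemma sgn_eq_if_within:
  fixes x y \<epsilon> T :: real
  assumes "0 < T" and "0 \<le> \<epsilon>" and "2 * \<epsilon> < \<bar>y\<bar>" and "(y - 2 * \<epsilon>) * T \<le> x" and "x \<le> (y + 2 * \<epsilon>) * T"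
  shows "sgn x = sgn y"
proof (cases "0 < y")
  case True
  with assms have "0 < (y - 2 * \<epsilon>) * T" by simp
  with assms have "0 < x" by linarith
  with True show ?thesis by simp
next
  case False
  with assms have "y < 0" "(y + 2 * \<epsilon>) * T < 0" by (auto simp: mult_neg_pos)
  with assms have "x < 0" by linarith
  with \<open>y < 0\<close> show ?thesis by simp
qed

lemma sgn_ln_mult_ln:
  fixes s1 s2 a b \<epsilon> T :: real
  assumes "0 < T" and "0 \<le> \<epsilon>" and "0 < s1" and "0 < s2"
    and "2 * \<epsilon> < \<bar>a\<bar>" and "2 * \<epsilon> < \<bar>b\<bar>"
    and prod: "s1 * s2 = exp ((a + b) * T)"
    and near: "exp_window T a \<epsilon> s1 \<or> exp_window T b \<epsilon> s1"
  shows "sgn (ln s1 * ln s2) = sgn (a * b)"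
proof -
  have ln2: "ln s2 = (a + b) * T - ln s1"
    using arg_cong[OF prod, of ln] \<open>0 < s1\<close> \<open>0 < s2\<close> by (simp add: ln_mult)
  have sgns: "sgn (ln s1) = sgn y \<and> sgn (ln s2) = sgn y'"
    if "2 * \<epsilon> < \<bar>y\<bar>" "2 * \<epsilon> < \<bar>y'\<bar>" "y + y' = a + b"
       "exp_window T y \<epsilon> s1" for y y'
  proof -
    have "(y - 2 * \<epsilon>) * T \<le> ln s1" "ln s1 \<le> (y + 2 * \<epsilon>) * T"
      using that(4) \<open>0 < s1\<close> unfolding exp_window_def
      by (metis exp_gt_zero ln_exp ln_le_cancel_iff)+
    then show ?thesis
      using sgn_eq_if_within[OF \<open>0 < T\<close> \<open>0 \<le> \<epsilon>\<close> that(1)]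
        sgn_eq_if_within[OF \<open>0 < T\<close> \<open>0 \<le> \<epsilon>\<close> that(2), of "ln s2"]
      unfolding ln2 that(3)[symmetric] by (simp add: algebra_simps)
  qed
  from near show ?thesis
    using sgns[of a b] sgns[of b a] assms(5,6) by (auto simp: sgn_mult mult.commute)
qed

lemma floquet_multipliers_large_Re:
  assumes wave: "traveling_wave c f" and "0 < T"
    and large: "\<bar>c\<^sup>2 - 1\<bar> + \<bar>c\<bar> + 2 < \<bar>Re lam\<bar>"
    and r: "floquet_multipliers c f T lam = (r1, r2)"
  defines "\<epsilon> \<equiv> 1 / (2 * cmod lam)"
  shows "cmod r1 * cmod r2 = exp ((Re (mu1 c lam) + Re (mu2 c lam)) * T)"
    and "exp_window T (Re (mu1 c lam)) \<epsilon> (cmod r1) \<or>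
         exp_window T (Re (mu2 c lam)) \<epsilon> (cmod r1)"
proof -
  have c: "c\<^sup>2 \<noteq> 1" using wave by (simp add: traveling_wave_def)
  obtain F where F: "is_fundamental_matrix c f lam F"
    using fundamental_matrix_exists[OF wave] .
  note multipliers = floquet_multipliers_of_fundamental_matrix[OF c F r]
  show "cmod r1 * cmod r2 = exp ((Re (mu1 c lam) + Re (mu2 c lam)) * T)"
    by (rule multipliers(1))
  then have "r1 \<noteq> 0" by auto
  note separated = large_Re_separates_mu[OF c large]
  show "exp_window T (Re (mu1 c lam)) \<epsilon> (cmod r1) \<or>
        exp_window T (Re (mu2 c lam)) \<epsilon> (cmod r1)"
    unfolding \<epsilon>_def using \<open>0 < T\<close>
    by (intro floquet_multiplier_modulus_bounds[OF c F _ separated(1) multipliers(2) \<open>r1 \<noteq> 0\<close>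
          separated(2)]) simp
qed

theorem lemma3p14:
  fixes c :: real and f :: "real \<Rightarrow> real" and T :: real
  assumes "traveling_wave c f"
    and "fundamental_period f T"
  shows "\<exists>R. \<forall>lam::complex. R < \<bar>Re lam\<bar> \<longrightarrow> sgn (G_p c f T lam) = sgn (gam c)"
proof (intro exI[of _ "\<bar>c\<^sup>2 - 1\<bar> + \<bar>c\<bar> + 2"] allI impI)
  have c: "c\<^sup>2 \<noteq> 1" and "0 < T"
    using assms by (auto simp: traveling_wave_def fundamental_period_def)
  fix lam :: complex
  assume large: "\<bar>c\<^sup>2 - 1\<bar> + \<bar>c\<bar> + 2 < \<bar>Re lam\<bar>"
  obtain r1 r2 where r: "floquet_multipliers c f T lam = (r1, r2)"
    by (cases "floquet_multipliers c f T lam")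
  note multipliers = floquet_multipliers_large_Re[OF assms(1) \<open>0 < T\<close> large r]
  then have "r1 \<noteq> 0" "r2 \<noteq> 0" by auto
  have "sgn (G_p c f T lam) = sgn (Re (mu1 c lam) * Re (mu2 c lam))"
    unfolding G_p_def r prod.case
    by (rule sgn_ln_mult_ln[OF \<open>0 < T\<close> _ _ _ large_Re_separates_mu(3,4)[OF c large] multipliers])
       (use \<open>r1 \<noteq> 0\<close> \<open>r2 \<noteq> 0\<close> in auto)
  also have "Re (mu1 c lam) * Re (mu2 c lam) = (Re lam)\<^sup>2 * gam c"
    using sq_ne_one_factors[OF c] by (simp add: Re_mu gam_eq field_simps power2_eq_square)
  also have "sgn \<dots> = sgn (gam c)"
  proof -
    have "0 < (Re lam)\<^sup>2" using large by simp
    then show ?thesis by (simp only: sgn_mult sgn_pos mult_1)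
  qed
  finally show "sgn (G_p c f T lam) = sgn (gam c)" .
qed

end
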